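(* Let $q=2$ and let $\mathcal{A}=(\mathbb{G}_a^2,\Phi)$ be the $T$-module defined by \[\Phi(T)=TI_2+\begin{pmatrix}0&0\\1&0\end{pmatrix}\tau.\] Then $\mathcal{A}$ is not abelian.
   Context: $A=\mathbb{F}_2[T]$, $k=\mathbb{F}_2(T)$, $\tau$ the Frobenius $z\mapsto z^2$ acting coordinatewise, with $\tau M=M^{(2)}\tau$ for matrices. $\mathrm{Hom}_k(\mathcal{A},\mathbb{G}_a)$, the $\mathbb{F}_2$-linear algebraic group homomorphisms $\mathbb{G}_a^2\to\mathbb{G}_a$ defined over $k$, is identified with $k\{\tau\}^2$ and made into a $k[T]$-module by letting $k$ act by left multiplication and $T\cdot f=f\circ\Phi(T)$. $\mathcal{A}$ is abelian if this $k[T]$-module has finite rank (equivalently here, is finitely generated). *)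

theory Defs
  imports "HOL-Computational_Algebra.Polynomial" "HOL-Computational_Algebra.Fraction_Field"
          "HOL-Library.Z2" "HOL-Library.Product_Plus"
begin

type_synonym kfield = "bit poly fract"

definition Tk :: kfield where
  "Tk = Fract [:0, 1:] 1"

text \<open>Twisted polynomials k{tau}: the poly f represents sum_i (coeff f i) tau^i.
  Multiplication in k{tau} satisfies tau c = c^2 tau.\<close>

text \<open>Right multiplication by T in k{tau}: (sum a_i tau^i) T = sum a_i T^(2^i) tau^i.\<close>
definition skew_mult_T :: "kfield poly \<Rightarrow> kfield poly" where
  "skew_mult_T f = Poly (map (\<lambda>i. coeff f i * Tk ^ (2 ^ i)) [0..<Suc (degree f)])"

definition skew_mult_tau :: "kfield poly \<Rightarrow> kfield poly" where
  "skew_mult_tau f = pCons 0 f"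

text \<open>Hom_k(A, G_a) = k{tau}^2, an element (f1,f2) being (x,y) |-> f1(x) + f2(y).
  Phi(T) = T I_2 + [[0,0],[1,0]] tau, i.e. Phi(T)(x,y) = (T x, x^2 + T y) (q = 2).
  The action T . f = f o Phi(T) gives (f1 T + f2 tau, f2 T).\<close>
definition Phi_T_act :: "kfield poly \<times> kfield poly \<Rightarrow> kfield poly \<times> kfield poly" where
  "Phi_T_act f = (skew_mult_T (fst f) + skew_mult_tau (snd f), skew_mult_T (snd f))"

definition kscal :: "kfield \<Rightarrow> kfield poly \<times> kfield poly \<Rightarrow> kfield poly \<times> kfield poly" where
  "kscal c f = (smult c (fst f), smult c (snd f))"

definition kT_act :: "kfield poly \<Rightarrow> kfield poly \<times> kfield poly \<Rightarrow> kfield poly \<times> kfield poly" where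
  "kT_act p f = (\<Sum>n\<le>degree p. kscal (coeff p n) ((Phi_T_act ^^ n) f))"

text \<open>A is abelian iff Hom_k(A, G_a) is a finitely generated k[T]-module.\<close>
definition abelian_A :: bool where
  "abelian_A \<longleftrightarrow> (\<exists>S. finite S \<and>
     (\<forall>f. \<exists>p :: kfield poly \<times> kfield poly \<Rightarrow> kfield poly. f = (\<Sum>s\<in>S. kT_act (p s) s)))"

end

theory Submission
  imports Defs
begin

text \<open>Since \<open>T \<cdot> (f\<^sub>1, f\<^sub>2) = (f\<^sub>1 T + f\<^sub>2 \<tau>, f\<^sub>2 T)\<close> and right multiplication by
  \<open>T\<close> preserves \<open>\<tau>\<close>-degree, the \<open>\<tau>\<close>-degree of the second component never grows under
  the \<open>k[T]\<close>-action. Hence the second components of the submodule generated by finitely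
  many elements have bounded \<open>\<tau>\<close>-degree, so \<open>(0, \<tau>\<^sup>n)\<close> escapes it for large \<open>n\<close>.\<close>

lemma degree_skew_mult_T_le: "degree (skew_mult_T f) \<le> degree f"
proof (rule degree_le, intro allI impI)
  fix i assume "degree f < i"
  then show "coeff (skew_mult_T f) i = 0"
    by (simp add: skew_mult_T_def nth_default_def)
qed

lemma degree_snd_funpow_Phi_T_act_le:
  "degree (snd ((Phi_T_act ^^ n) f)) \<le> degree (snd f)"
  by (induction n) (auto simp: Phi_T_act_def intro: order_trans[OF degree_skew_mult_T_le])

lemma degree_snd_kT_act_le: "degree (snd (kT_act p f)) \<le> degree (snd f)"
  unfolding kT_act_def snd_sum
  by (rule degree_sum_le)
     (auto simp: kscal_def intro: order_trans[OF degree_smult_le] degree_snd_funpow_Phi_T_act_le)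

lemma degree_snd_sum_kT_act_le:
  assumes "finite S"
  shows "degree (snd (\<Sum>s\<in>S. kT_act (p s) s)) \<le> (\<Sum>s\<in>S. degree (snd s))"
  unfolding snd_sum
proof (rule degree_sum_le[OF assms])
  fix s assume "s \<in> S"
  then have "degree (snd s) \<le> (\<Sum>s\<in>S. degree (snd s))"
    using assms by (metis (no_types, lifting) member_le_sum zero_le)
  then show "degree (snd (kT_act (p s) s)) \<le> (\<Sum>s\<in>S. degree (snd s))"
    using degree_snd_kT_act_le order_trans by blast
qed

theorem proposition7:
  shows "\<not> abelian_A"
proof
  assume "abelian_A"
  then obtain S where fin: "finite S" and gen:
    "\<forall>f. \<exists>p :: kfield poly \<times> kfield poly \<Rightarrow> kfield poly. f = (\<Sum>s\<in>S. kT_act (p s) s)"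
    unfolding abelian_A_def by blast
  define D where "D = (\<Sum>s\<in>S. degree (snd s))"
  obtain p where p: "(0, monom (1::kfield) (Suc D)) = (\<Sum>s\<in>S. kT_act (p s) s)"
    using gen by blast
  have "degree (monom (1::kfield) (Suc D)) \<le> D"
    using degree_snd_sum_kT_act_le[OF fin, of p] p unfolding D_def by (metis snd_conv)
  then show False by (simp add: degree_monom_eq)
qed

end
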